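(* Let $M$ be an ordinal monoid with merge and $A\subseteq M$. Then at least one of the following holds: (1) $a\cdot\mathrm{Cl}^{\mathrm{ord}+}_{\sharp}(A)\subsetneq\mathrm{Cl}^{\mathrm{ord}+}_{\sharp}(A)$ for some $a\in A$; (2) $\mathrm{Cl}^{\mathrm{ord}+}_{\sharp}(\mathrm{Cl}^{\omega}_{\sharp}(A))\subsetneq\mathrm{Cl}^{\mathrm{ord}+}_{\sharp}(A)$; (3) $x\cdot y=y$ and $x^\omega=y^\omega$ for all $x,y\in\mathrm{Cl}^{\mathrm{ord}+}_{\sharp}(A)$.
   Context: An ordinal monoid has generalised product $\pi$ on countable-ordinal-length words; $1=\pi(\varepsilon)$, $x\cdot y=\pi(xy)$, $x^\omega=\pi(xxx\cdots)$; ordered by $\le$ if $u\le v$ letterwise implies $\pi(u)\le\pi(v)$. $x^!$ idempotent power, $x^{!+k}$ eventual value of $x^{n!+k}$ in a finite semigroup. Ordinal monoid with merge: $(M,1,\le,\cdot,-^\omega,-^\sharp)$, $M$ finite, $(M,1,\le,\cdot,-^\omega)$ the presentation of an ordered finite ordinal monoid, $-^\sharp$ monotone with $a^{!+k}\le a^\sharp$, $(a^!)^\sharp=a^!$, $a^\sharp a^\sharp=(a^\sharp)^\sharp=a^\sharp$, $(ab)^\sharp=a(ba)^\sharp b$ for all $a,b\in M$, $k\in\mathbb Z$. Closures of $A\subseteq M$: $\mathrm{Cl}^{+}_{\sharp}(A)$ closure under $\cdot$ and $-^\sharp$; $\mathrm{Cl}^{\mathrm{ord}+}_{\sharp}(A)$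 closure under $\cdot$, $-^\sharp$ and $-^\omega$; $\mathrm{Cl}^{\omega}_{\sharp}(A)=\{a\cdot b^\omega:a,b\in\mathrm{Cl}^{+}_{\sharp}(A)\}$. $a\cdot X=\{a\cdot x: x\in X\}$. *)

theory Defs
  imports Main
begin

text \<open>A word of countable ordinal length over 'a is represented as a pair (r, w)
where r is a well-order on a subset of nat (its Field, the positions; every countable
ordinal is representable this way) and w assigns letters to positions (only values on
Field r matter).\<close>

type_synonym 'a oword = "nat rel \<times> (nat \<Rightarrow> 'a)"

definition ordinal_product :: "('a oword \<Rightarrow> 'a) \<Rightarrow> bool" where
  "ordinal_product \<pi> \<longleftrightarrow>
     \<comment> \<open>invariance under order isomorphism of positions\<close>
     (\<forall>r r' f w w'. Well_order r \<and> Well_order r' \<and> bij_betw f (Field r) (Field r') \<and>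
        (\<forall>i\<in>Field r. \<forall>j\<in>Field r. (i, j) \<in> r \<longleftrightarrow> (f i, f j) \<in> r') \<and>
        (\<forall>i\<in>Field r. w' (f i) = w i)
        \<longrightarrow> \<pi> (r, w) = \<pi> (r', w')) \<and>
     \<comment> \<open>one-letter words\<close>
     (\<forall>n w. \<pi> ({(n, n)}, w) = w n) \<and>
     \<comment> \<open>generalised associativity: cutting a word into (possibly empty) consecutive
        factors indexed by a countable ordinal R\<close>
     (\<forall>r R g w. Well_order r \<and> Well_order R \<and> (\<forall>i\<in>Field r. g i \<in> Field R) \<and>
        (\<forall>i\<in>Field r. \<forall>j\<in>Field r. (i, j) \<in> r \<longrightarrow> (g i, g j) \<in> R)
        \<longrightarrow> \<pi> (r, w) = \<pi> (R, \<lambda>k. \<pi> (Restr r {i \<in> Field r. g i = k}, w)))"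

definition ordered_ordinal_product :: "('a::order oword \<Rightarrow> 'a) \<Rightarrow> bool" where
  "ordered_ordinal_product \<pi> \<longleftrightarrow> ordinal_product \<pi> \<and>
     (\<forall>r w w'. Well_order r \<and> (\<forall>i\<in>Field r. w i \<le> w' i) \<longrightarrow> \<pi> (r, w) \<le> \<pi> (r, w'))"

definition presents ::
  "('a oword \<Rightarrow> 'a) \<Rightarrow> 'a \<Rightarrow> ('a \<Rightarrow> 'a \<Rightarrow> 'a) \<Rightarrow> ('a \<Rightarrow> 'a) \<Rightarrow> bool" where
  "presents \<pi> one mult omega \<longleftrightarrow>
     one = \<pi> ({}, \<lambda>_. undefined) \<and>
     (\<forall>x y. mult x y = \<pi> ({(0, 0), (0, 1), (1, 1)}, \<lambda>i. if i = 0 then x else y)) \<and>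
     (\<forall>x. omega x = \<pi> ({(i, j). i \<le> j}, \<lambda>_. x))"

fun mpow :: "'a \<Rightarrow> ('a \<Rightarrow> 'a \<Rightarrow> 'a) \<Rightarrow> 'a \<Rightarrow> nat \<Rightarrow> 'a" where
  "mpow one mult a 0 = one"
| "mpow one mult a (Suc n) = mult a (mpow one mult a n)"

definition idem_pow_plus :: "'a \<Rightarrow> ('a \<Rightarrow> 'a \<Rightarrow> 'a) \<Rightarrow> 'a \<Rightarrow> int \<Rightarrow> 'a" where
  "idem_pow_plus one mult a k =
     (THE y. \<exists>N. \<forall>n\<ge>N. mpow one mult a (nat (int (fact n) + k)) = y)"

definition idem_pow :: "'a \<Rightarrow> ('a \<Rightarrow> 'a \<Rightarrow> 'a) \<Rightarrow> 'a \<Rightarrow> 'a" where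
  "idem_pow one mult a = idem_pow_plus one mult a 0"

definition ordinal_monoid_with_merge ::
  "'a::{finite,order} \<Rightarrow> ('a \<Rightarrow> 'a \<Rightarrow> 'a) \<Rightarrow> ('a \<Rightarrow> 'a) \<Rightarrow> ('a \<Rightarrow> 'a) \<Rightarrow> bool" where
  "ordinal_monoid_with_merge one mult omega sharp \<longleftrightarrow>
     (\<exists>\<pi>. ordered_ordinal_product \<pi> \<and> presents \<pi> one mult omega) \<and>
     mono sharp \<and>
     (\<forall>a k. idem_pow_plus one mult a k \<le> sharp a) \<and>
     (\<forall>a. sharp (idem_pow one mult a) = idem_pow one mult a) \<and>
     (\<forall>a. mult (sharp a) (sharp a) = sharp a) \<and>
     (\<forall>a. sharp (sharp a) = sharp a) \<and>
     (\<forall>a b. sharp (mult a b) = mult a (mult (sharp (mult b a)) b))"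

inductive_set cl_plus_sharp :: "('a \<Rightarrow> 'a \<Rightarrow> 'a) \<Rightarrow> ('a \<Rightarrow> 'a) \<Rightarrow> 'a set \<Rightarrow> 'a set"
  for mult sharp A where
  base: "a \<in> A \<Longrightarrow> a \<in> cl_plus_sharp mult sharp A"
| mult: "a \<in> cl_plus_sharp mult sharp A \<Longrightarrow> b \<in> cl_plus_sharp mult sharp A \<Longrightarrow>
         mult a b \<in> cl_plus_sharp mult sharp A"
| sharp: "a \<in> cl_plus_sharp mult sharp A \<Longrightarrow> sharp a \<in> cl_plus_sharp mult sharp A"

inductive_set cl_ord_plus_sharp ::
  "('a \<Rightarrow> 'a \<Rightarrow> 'a) \<Rightarrow> ('a \<Rightarrow> 'a) \<Rightarrow> ('a \<Rightarrow> 'a) \<Rightarrow> 'a set \<Rightarrow> 'a set"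
  for mult omega sharp A where
  base: "a \<in> A \<Longrightarrow> a \<in> cl_ord_plus_sharp mult omega sharp A"
| mult: "a \<in> cl_ord_plus_sharp mult omega sharp A \<Longrightarrow> b \<in> cl_ord_plus_sharp mult omega sharp A \<Longrightarrow>
         mult a b \<in> cl_ord_plus_sharp mult omega sharp A"
| sharp: "a \<in> cl_ord_plus_sharp mult omega sharp A \<Longrightarrow> sharp a \<in> cl_ord_plus_sharp mult omega sharp A"
| omega: "a \<in> cl_ord_plus_sharp mult omega sharp A \<Longrightarrow> omega a \<in> cl_ord_plus_sharp mult omega sharp A"

definition cl_omega_sharp ::
  "('a \<Rightarrow> 'a \<Rightarrow> 'a) \<Rightarrow> ('a \<Rightarrow> 'a) \<Rightarrow> ('a \<Rightarrow> 'a) \<Rightarrow> 'a set \<Rightarrow> 'a set" where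
  "cl_omega_sharp mult omega sharp A =
     {mult a (omega b) | a b. a \<in> cl_plus_sharp mult sharp A \<and> b \<in> cl_plus_sharp mult sharp A}"

end

theory Submission
  imports Defs
begin

text \<open>Let C = Cl^ord+_#(A); as M is finite, an element z of C either permutes C by left
  translation or not. Every permutation z has a power q fixing C pointwise, with
  z^omega = q^omega, and all such left units of C have the same omega power because
  (pq)^omega = p (qp)^omega. If (1) and (2) fail, every a in A permutes C and C is generated
  by Cl^omega_#(A). In a product c d^omega that permutes C, d is then a left unit, c^omega = d^omega,
  and the product equals d^omega, an idempotent permutation, hence a left unit. Consequently the
  permutations in A, and then all of Cl^+_#(A), are left units, so Cl^omega_#(A) collapses to
  the single element e = a^omega. Since the permutation a lies in the closure of {e}, e itself
  permutes C, hence is a left unit, and so is every element generated from it: this is (3).\<close>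

definition nat_le_on :: "nat set \<Rightarrow> nat rel" where
  "nat_le_on S = Restr natLeq S"

lemma Well_order_nat_le_on: "Well_order (nat_le_on S)"
  unfolding nat_le_on_def by (rule Well_order_Restr[OF natLeq_Well_order])

lemma nat_le_on_iff: "(i, j) \<in> nat_le_on S \<longleftrightarrow> i \<in> S \<and> j \<in> S \<and> i \<le> j"
  unfolding nat_le_on_def natLeq_def by auto

lemma Field_nat_le_on: "Field (nat_le_on S) = S"
  unfolding Field_def by (auto simp: nat_le_on_iff)

lemma well_order_on_nat_le_on: "well_order_on S (nat_le_on S)"
  using Well_order_nat_le_on[of S] by (simp add: Field_nat_le_on)

lemma nat_le_on_empty: "nat_le_on {} = {}"
  by (auto simp: nat_le_on_def)

lemma nat_le_on_singleton: "nat_le_on {a} = {(a, a)}"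
  by (auto simp: nat_le_on_iff)

lemma div_fiber_eq: "0 < (k::nat) \<Longrightarrow> {i. i div k = j} = {j * k..<j * k + k}"
proof (intro set_eqI iffI)
  fix i assume k: "0 < k"
  { assume "i \<in> {i. i div k = j}"
    then show "i \<in> {j * k..<j * k + k}"
      using div_mult_mod_eq[of i k] mod_less_divisor[OF k, of i] by auto }
  { assume "i \<in> {j * k..<j * k + k}"
    then have "i div k = j" by (intro div_nat_eqI) (auto simp: mult.commute)
    then show "i \<in> {i. i div k = j}" by simp }
qed

locale ordinal_product_presentation =
  fixes pi :: "'a oword \<Rightarrow> 'a" and one :: 'a and mult :: "'a \<Rightarrow> 'a \<Rightarrow> 'a"
    and omega :: "'a \<Rightarrow> 'a"
  assumes ordinal_product: "ordinal_product pi"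
    and presents: "presents pi one mult omega"
begin

lemma pi_iso:
  "\<lbrakk>Well_order r; Well_order r'; bij_betw f (Field r) (Field r');
    \<forall>i\<in>Field r. \<forall>j\<in>Field r. (i, j) \<in> r \<longleftrightarrow> (f i, f j) \<in> r'; \<forall>i\<in>Field r. w' (f i) = w i\<rbrakk>
   \<Longrightarrow> pi (r, w) = pi (r', w')"
  using ordinal_product unfolding ordinal_product_def by blast

lemma pi_singleton: "pi ({(n, n)}, w) = w n"
  using ordinal_product unfolding ordinal_product_def by blast

lemma pi_assoc:
  "\<lbrakk>Well_order r; Well_order R; \<forall>i\<in>Field r. g i \<in> Field R;
    \<forall>i\<in>Field r. \<forall>j\<in>Field r. (i, j) \<in> r \<longrightarrow> (g i, g j) \<in> R\<rbrakk>
   \<Longrightarrow> pi (r, w) = pi (R, \<lambda>k. pi (Restr r {i \<in> Field r. g i = k}, w))"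
  using ordinal_product unfolding ordinal_product_def by blast

lemma pi_nat_cong: "(\<And>i. i \<in> S \<Longrightarrow> w i = w' i) \<Longrightarrow> pi (nat_le_on S, w) = pi (nat_le_on S, w')"
  by (rule pi_iso[where f = id]) (auto simp: well_order_on_nat_le_on Field_nat_le_on)

lemma pi_nat_assoc:
  assumes "g ` S \<subseteq> T" and "\<forall>i\<in>S. \<forall>j\<in>S. i \<le> j \<longrightarrow> g i \<le> g j"
  shows "pi (nat_le_on S, w) = pi (nat_le_on T, \<lambda>k. pi (nat_le_on {i \<in> S. g i = k}, w))"
proof -
  have "Restr (nat_le_on S) {i \<in> Field (nat_le_on S). g i = k} = nat_le_on {i \<in> S. g i = k}" for k
    by (auto simp: Field_nat_le_on nat_le_on_iff)
  moreover have "pi (nat_le_on S, w)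
      = pi (nat_le_on T, \<lambda>k. pi (Restr (nat_le_on S) {i \<in> Field (nat_le_on S). g i = k}, w))"
    using assms by (intro pi_assoc) (auto simp: well_order_on_nat_le_on Field_nat_le_on nat_le_on_iff)
  ultimately show ?thesis by simp
qed

lemma pi_nat_singleton: "pi (nat_le_on {a}, w) = w a"
  by (simp add: nat_le_on_singleton pi_singleton)

lemma pi_empty: "pi ({}, w) = one"
proof -
  have "pi (nat_le_on {}, w) = pi (nat_le_on {}, \<lambda>_. undefined)" by (rule pi_nat_cong) auto
  then show ?thesis using presents unfolding presents_def by (simp add: nat_le_on_empty)
qed

lemma mult_eq_pi: "mult x y = pi (nat_le_on {0..<2}, \<lambda>i. if i = 0 then x else y)"
proof -
  have "{(0, 0), (0, 1), (1, 1)} = nat_le_on {0..<2::nat}" by (auto simp: nat_le_on_iff)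
  then show ?thesis using presents unfolding presents_def by metis
qed

lemma omega_eq_pi: "omega x = pi (nat_le_on UNIV, \<lambda>_. x)"
proof -
  have "{(i, j). i \<le> j} = nat_le_on (UNIV :: nat set)" by (auto simp: nat_le_on_iff)
  then show ?thesis using presents unfolding presents_def by metis
qed

lemma pi_split:
  assumes "S1 \<subseteq> S" and "\<forall>i\<in>S1. \<forall>j\<in>S - S1. i < j"
  shows "pi (nat_le_on S, w) = mult (pi (nat_le_on S1, w)) (pi (nat_le_on (S - S1), w))"
proof -
  let ?g = "\<lambda>i. if i \<in> S1 then 0 else (1::nat)"
  have "pi (nat_le_on S, w) = pi (nat_le_on {0..<2}, \<lambda>k. pi (nat_le_on {i \<in> S. ?g i = k}, w))"
    using assms by (intro pi_nat_assoc) (auto, meson DiffI leD)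
  also have "\<dots> = pi (nat_le_on {0..<2},
      \<lambda>k. if k = 0 then pi (nat_le_on S1, w) else pi (nat_le_on (S - S1), w))"
  proof (rule pi_nat_cong)
    fix k :: nat assume "k \<in> {0..<2}"
    then have "{i \<in> S. ?g i = k} = (if k = 0 then S1 else S - S1)" using assms by auto
    then show "pi (nat_le_on {i \<in> S. ?g i = k}, w)
        = (if k = 0 then pi (nat_le_on S1, w) else pi (nat_le_on (S - S1), w))" by simp
  qed
  finally show ?thesis by (simp add: mult_eq_pi)
qed

lemma mult_left_neutral: "mult one x = x"
  using pi_split[of "{}" "{0}" "\<lambda>_. x"] by (simp add: pi_nat_singleton nat_le_on_empty pi_empty)

lemma mult_right_neutral: "mult x one = x"
  using pi_split[of "{0}" "{0}" "\<lambda>_. x"] by (simp add: pi_nat_singleton nat_le_on_empty pi_empty)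

lemma mult_assoc: "mult (mult x y) z = mult x (mult y z)"
proof -
  define w where "w = (\<lambda>i::nat. if i = 0 then x else if i = 1 then y else z)"
  have "pi (nat_le_on {0, 1, 2}, w) = mult (pi (nat_le_on {0, 1}, w)) (pi (nat_le_on {2}, w))"
    using pi_split[of "{0, 1}" "{0, 1, 2}" w] by (simp add: insert_Diff_if)
  moreover have "pi (nat_le_on {0, 1}, w) = mult x y"
    using pi_split[of "{0}" "{0, 1}" w] by (simp add: pi_nat_singleton w_def)
  moreover have "pi (nat_le_on {0, 1, 2}, w) = mult x (pi (nat_le_on {1, 2}, w))"
    using pi_split[of "{0}" "{0, 1, 2}" w] by (simp add: pi_nat_singleton insert_Diff_if w_def)
  moreover have "pi (nat_le_on {1, 2}, w) = mult y z"
    using pi_split[of "{1}" "{1, 2}" w] by (simp add: pi_nat_singleton w_def)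
  ultimately show ?thesis by (simp add: pi_nat_singleton w_def)
qed

lemma pi_const_interval: "pi (nat_le_on {a..<a + k}, \<lambda>_. x) = mpow one mult x k"
proof (induction k arbitrary: a)
  case 0
  then show ?case by (simp add: nat_le_on_empty pi_empty)
next
  case (Suc k)
  have "{a..<a + Suc k} - {a} = {Suc a..<Suc a + k}" by auto
  then show ?case
    using pi_split[of "{a}" "{a..<a + Suc k}" "\<lambda>_. x"] Suc.IH[of "Suc a"]
    by (simp add: pi_nat_singleton)
qed

lemma pi_shift: "pi (nat_le_on UNIV, \<lambda>i. w (i + a)) = pi (nat_le_on {a..}, w)"
proof (rule pi_iso[where f = "\<lambda>i. i + a"])
  have "x \<in> range (\<lambda>i. i + a)" if "a \<le> x" for x
    using that by (intro image_eqI[where x = "x - a"]) auto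
  then have "range (\<lambda>i. i + a) = {a..}" by auto
  then show "bij_betw (\<lambda>i. i + a) (Field (nat_le_on UNIV)) (Field (nat_le_on {a..}))"
    by (auto simp: Field_nat_le_on bij_betw_def inj_on_def)
qed (auto simp: well_order_on_nat_le_on Field_nat_le_on nat_le_on_iff)

lemma mult_omega: "mult x (omega x) = omega x"
proof -
  have "UNIV - {0::nat} = {1..}" by auto
  then show ?thesis
    using pi_split[of "{0}" UNIV "\<lambda>_. x"] pi_shift[of "\<lambda>_. x" 1]
    by (simp add: omega_eq_pi pi_nat_singleton)
qed

lemma omega_mpow: "0 < k \<Longrightarrow> omega (mpow one mult x k) = omega x"
proof -
  assume k: "0 < k"
  have "pi (nat_le_on UNIV, \<lambda>_. x)
      = pi (nat_le_on UNIV, \<lambda>j. pi (nat_le_on {i \<in> UNIV. i div k = j}, \<lambda>_. x))"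
    by (rule pi_nat_assoc) (auto simp: div_le_mono)
  also have "\<dots> = pi (nat_le_on UNIV, \<lambda>_. mpow one mult x k)"
    by (rule pi_nat_cong) (simp add: div_fiber_eq[OF k] pi_const_interval)
  finally show ?thesis by (simp add: omega_eq_pi)
qed

lemma pi_alternating: "pi (nat_le_on UNIV, \<lambda>i. if even i then a else b) = omega (mult a b)"
proof -
  let ?w = "\<lambda>i::nat. if even i then a else b"
  have "pi (nat_le_on UNIV, ?w) = pi (nat_le_on UNIV, \<lambda>j. pi (nat_le_on {i \<in> UNIV. i div 2 = j}, ?w))"
    by (rule pi_nat_assoc) (auto simp: div_le_mono)
  also have "\<dots> = pi (nat_le_on UNIV, \<lambda>_. mult a b)"
  proof (rule pi_nat_cong)
    fix j
    have "{i \<in> UNIV. i div 2 = j} = {2 * j, Suc (2 * j)}"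
      and "{2 * j, Suc (2 * j)} - {2 * j} = {Suc (2 * j)}" by auto
    then show "pi (nat_le_on {i \<in> UNIV. i div 2 = j}, ?w) = mult a b"
      using pi_split[of "{2 * j}" "{2 * j, Suc (2 * j)}" ?w] by (simp add: pi_nat_singleton)
  qed
  finally show ?thesis by (simp add: omega_eq_pi)
qed

lemma omega_mult: "omega (mult x y) = mult x (omega (mult y x))"
proof -
  let ?w = "\<lambda>i::nat. if even i then x else y"
  have "UNIV - {0::nat} = {1..}" by auto
  moreover have "(\<lambda>i. ?w (i + 1)) = (\<lambda>i. if even i then y else x)" by auto
  ultimately show ?thesis
    using pi_split[of "{0}" UNIV ?w] pi_shift[of ?w 1] pi_alternating[of x y] pi_alternating[of y x]
    by (simp add: pi_nat_singleton)
qed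

end

lemma mpow_Suc_idempotent:
  assumes "\<And>y. mult y one = y" and "mult x x = x"
  shows "mpow one mult x (Suc n) = x"
  by (induction n) (simp_all add: assms)

lemma idem_pow_idempotent:
  assumes "\<And>y. mult y one = y" and "mult x x = x"
  shows "idem_pow one mult x = x"
  unfolding idem_pow_def idem_pow_plus_def
proof (rule the_equality)
  have pow: "mpow one mult x (nat (int (fact n) + 0)) = x" for n
    using mpow_Suc_idempotent[OF assms] by (metis Suc_pred add_0_right fact_gt_zero nat_int)
  then show "\<exists>N. \<forall>n\<ge>N. mpow one mult x (nat (int (fact n) + 0)) = x" by blast
  show "y = x" if "\<exists>N. \<forall>n\<ge>N. mpow one mult x (nat (int (fact n) + 0)) = y" for y
    using that pow by blast
qed

lemma cl_ord_plus_sharp_least: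
  assumes "X \<subseteq> C" and "\<And>x y. x \<in> C \<Longrightarrow> y \<in> C \<Longrightarrow> mult x y \<in> C"
    and "\<And>x. x \<in> C \<Longrightarrow> sharp x \<in> C" and "\<And>x. x \<in> C \<Longrightarrow> omega x \<in> C"
  shows "cl_ord_plus_sharp mult omega sharp X \<subseteq> C"
proof
  fix z assume "z \<in> cl_ord_plus_sharp mult omega sharp X"
  then show "z \<in> C" by induction (use assms in auto)
qed

lemma cl_plus_sharp_subset_cl_ord_plus_sharp:
  "cl_plus_sharp mult sharp A \<subseteq> cl_ord_plus_sharp mult omega sharp A"
proof
  fix x assume "x \<in> cl_plus_sharp mult sharp A"
  then show "x \<in> cl_ord_plus_sharp mult omega sharp A"
    by induction (auto intro: cl_ord_plus_sharp.intros)
qed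

lemma cl_omega_sharp_subset_cl_ord_plus_sharp:
  "cl_omega_sharp mult omega sharp A \<subseteq> cl_ord_plus_sharp mult omega sharp A"
  using cl_plus_sharp_subset_cl_ord_plus_sharp[of mult sharp A omega] unfolding cl_omega_sharp_def
  by (blast intro: cl_ord_plus_sharp.mult cl_ord_plus_sharp.omega)

lemma cl_ord_plus_sharp_empty: "cl_ord_plus_sharp mult omega sharp {} = {}"
  using cl_ord_plus_sharp_least[of "{}" "{}" mult sharp omega] by simp

locale merge_algebra =
  fixes one :: "'a::finite" and mult :: "'a \<Rightarrow> 'a \<Rightarrow> 'a" and omega sharp :: "'a \<Rightarrow> 'a"
  assumes mult_assoc: "mult (mult x y) z = mult x (mult y z)"
    and mult_left_neutral: "mult one x = x"
    and mult_right_neutral: "mult x one = x"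
    and mult_omega: "mult x (omega x) = omega x"
    and omega_mult: "omega (mult x y) = mult x (omega (mult y x))"
    and omega_mpow: "0 < k \<Longrightarrow> omega (mpow one mult x k) = omega x"
    and sharp_mult_sharp: "mult (sharp x) (sharp x) = sharp x"
    and sharp_idempotent: "mult x x = x \<Longrightarrow> sharp x = x"
    and mult_sharp: "mult x (sharp x) = sharp x"
begin

definition perm_on :: "'a set \<Rightarrow> 'a \<Rightarrow> bool" where
  "perm_on C z \<longleftrightarrow> z \<in> C \<and> inj_on (mult z) C"

definition left_unit_on :: "'a set \<Rightarrow> 'a \<Rightarrow> bool" where
  "left_unit_on C z \<longleftrightarrow> z \<in> C \<and> (\<forall>u\<in>C. mult z u = u)"

lemma mpow_add: "mpow one mult x (m + n) = mult (mpow one mult x m) (mpow one mult x n)"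
  by (induction m) (simp_all add: mult_left_neutral mult_assoc)

lemma omega_left_unit_on_eq:
  assumes "left_unit_on C p" and "left_unit_on C q"
  shows "omega p = omega q"
  using omega_mult[of p q] mult_omega[of p] assms unfolding left_unit_on_def by simp

lemma sharp_left_unit_on: "left_unit_on C x \<Longrightarrow> sharp x = x"
  unfolding left_unit_on_def by (simp add: sharp_idempotent)

context
  fixes C :: "'a set"
  assumes closed_mult: "\<forall>x\<in>C. \<forall>y\<in>C. mult x y \<in> C"
  notes mult_closed = closed_mult[rule_format]
begin

lemma perm_on_iff_image_eq: "z \<in> C \<Longrightarrow> perm_on C z \<longleftrightarrow> mult z ` C = C"
  unfolding perm_on_def
  by (metis endo_inj_surj finite finite_surj_inj image_subsetI mult_closed order_refl)

lemma perm_on_multD: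
  assumes "x \<in> C" and "y \<in> C" and "perm_on C (mult x y)"
  shows "perm_on C x" and "perm_on C y"
proof -
  have "C = mult (mult x y) ` C"
    using assms perm_on_iff_image_eq mult_closed by blast
  also have "\<dots> \<subseteq> mult x ` C"
    using assms(2) by (auto simp: mult_assoc intro: mult_closed)
  finally show "perm_on C x"
    using assms(1) perm_on_iff_image_eq by (metis image_subsetI mult_closed subset_antisym)
  show "perm_on C y"
    using assms unfolding perm_on_def by (auto simp: inj_on_def mult_assoc)
qed

lemma perm_on_mult:
  assumes "perm_on C x" and "perm_on C y"
  shows "perm_on C (mult x y)"
proof -
  have "inj_on (mult x \<circ> mult y) C"
    using assms perm_on_iff_image_eq[of y] by (intro comp_inj_on) (auto simp: perm_on_def)
  moreover have "mult (mult x y) = mult x \<circ> mult y" by (auto simp: mult_assoc)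
  ultimately show ?thesis
    using assms mult_closed unfolding perm_on_def by simp
qed

lemma left_unit_on_imp_perm_on: "left_unit_on C z \<Longrightarrow> perm_on C z"
  unfolding left_unit_on_def perm_on_def by (simp add: inj_on_def)

lemma left_unit_on_mult: "left_unit_on C x \<Longrightarrow> left_unit_on C y \<Longrightarrow> left_unit_on C (mult x y)"
  unfolding left_unit_on_def by (simp add: mult_assoc mult_closed)

text \<open>A permutation z of C absorbing y on the left (resp. q on the right) forces y (resp. q)
  to act trivially: on the left because z is surjective, on the right because z is injective.\<close>

lemma left_unit_on_if_absorbs:
  assumes "perm_on C z" and "y \<in> C" and "mult y z = z"
  shows "left_unit_on C y"
  unfolding left_unit_on_def
proof (intro conjI ballI)
  fix u assume "u \<in> C"
  then obtain v where "u = mult z v"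
    using assms(1) perm_on_iff_image_eq[of z] perm_on_def by blast
  then show "mult y u = u" using assms(3) by (simp flip: mult_assoc)
qed (fact assms(2))

lemma left_unit_on_if_right_neutral:
  assumes "perm_on C z" and "q \<in> C" and "mult z q = z"
  shows "left_unit_on C q"
  unfolding left_unit_on_def
proof (intro conjI ballI)
  fix u assume "u \<in> C"
  then have "mult z (mult q u) = mult z u" using assms(3) by (simp flip: mult_assoc)
  then show "mult q u = u"
    using assms \<open>u \<in> C\<close> mult_closed unfolding perm_on_def by (meson inj_onD)
qed (fact assms(2))

lemma idempotent_perm_on_left_unit_on: "perm_on C z \<Longrightarrow> mult z z = z \<Longrightarrow> left_unit_on C z"
  by (rule left_unit_on_if_absorbs) (auto simp: perm_on_def)

lemma perm_on_mpow_Suc: "perm_on C x \<Longrightarrow> perm_on C (mpow one mult x (Suc n))"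
  by (induction n) (simp_all add: mult_right_neutral perm_on_mult)

lemma perm_on_has_left_unit_power:
  assumes "perm_on C x"
  obtains q where "left_unit_on C q" and "omega q = omega x"
proof -
  have "\<not> inj (\<lambda>n. mpow one mult x (Suc n))"
    using finite_imageD[of "\<lambda>n. mpow one mult x (Suc n)" UNIV] by auto
  then obtain i j where "i < j" and eq: "mpow one mult x (Suc i) = mpow one mult x (Suc j)"
    unfolding inj_def by (metis linorder_neqE_nat)
  then obtain k where "Suc j = Suc i + Suc k" by (auto dest: less_imp_Suc_add)
  define q where "q = mpow one mult x (Suc k)"
  have "mult (mpow one mult x (Suc i)) q = mpow one mult x (Suc i)"
    using eq mpow_add[of x "Suc i" "Suc k"] \<open>Suc j = Suc i + Suc k\<close> by (simp add: q_def)
  then have "left_unit_on C q"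
    using perm_on_mpow_Suc[OF assms] unfolding q_def
    by (intro left_unit_on_if_right_neutral) (auto simp: perm_on_def)
  moreover have "omega q = omega x" unfolding q_def by (rule omega_mpow) simp
  ultimately show thesis by (rule that)
qed

lemma omega_perm_on_eq: "perm_on C x \<Longrightarrow> left_unit_on C p \<Longrightarrow> omega x = omega p"
  by (metis omega_left_unit_on_eq perm_on_has_left_unit_power)

lemma omega_perm_on_left_unit_on:
  assumes "y \<in> C" and "perm_on C (omega y)"
  shows "left_unit_on C (omega y)"
proof -
  have "left_unit_on C y"
    using assms by (intro left_unit_on_if_absorbs[OF assms(2)]) (simp_all add: mult_omega)
  with assms(2) have "omega (omega y) = omega y" by (rule omega_perm_on_eq)
  then show ?thesis
    using assms(2) mult_omega[of "omega y"] by (intro idempotent_perm_on_left_unit_on) simp_all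
qed

lemma mult_omega_perm_on_left_unit_on:
  assumes "c \<in> C" and "d \<in> C" and "omega d \<in> C" and "perm_on C (mult c (omega d))"
  shows "left_unit_on C (mult c (omega d))"
proof -
  have "perm_on C c" and "perm_on C (omega d)"
    using perm_on_multD assms by blast+
  then have "left_unit_on C d"
    using assms(2) mult_omega[of d] by (intro left_unit_on_if_absorbs) simp_all
  with \<open>perm_on C c\<close> have "omega c = omega d" by (rule omega_perm_on_eq)
  then show ?thesis
    using omega_perm_on_left_unit_on assms(2) \<open>perm_on C (omega d)\<close> mult_omega[of c] by simp
qed

lemma cl_plus_sharp_left_unit_on:
  assumes "\<forall>a\<in>A. left_unit_on C a" and "x \<in> cl_plus_sharp mult sharp A"
  shows "left_unit_on C x"
  using assms(2)
  by induction (simp_all add: assms(1) left_unit_on_mult sharp_left_unit_on)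

text \<open>Left translation by a product, a sharp power or an omega power is a permutation only if
  left translation by a factor is one; so permutations in a closure come from generators.\<close>

lemma perm_on_cl_ord_plus_sharp_generator:
  assumes "cl_ord_plus_sharp mult omega sharp X \<subseteq> C"
    and "z \<in> cl_ord_plus_sharp mult omega sharp X" and "perm_on C z"
  shows "\<exists>x\<in>X. perm_on C x"
  using assms(2,3)
proof induction
  case (mult y1 y2)
  then show ?case using assms(1) perm_on_multD by blast
next
  case (sharp y)
  then have "left_unit_on C y"
    using assms(1) mult_sharp by (intro left_unit_on_if_absorbs) auto
  then show ?case using sharp.IH left_unit_on_imp_perm_on by blast
next
  case (omega y)
  then have "left_unit_on C y"
    using assms(1) mult_omega by (intro left_unit_on_if_absorbs) auto
  then show ?case using omega.IH left_unit_on_imp_perm_on by blast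
qed auto

lemma perm_on_cl_ord_plus_sharp_left_unit_on:
  assumes "cl_ord_plus_sharp mult omega sharp X \<subseteq> C"
    and "\<forall>x\<in>X. perm_on C x \<longrightarrow> left_unit_on C x"
    and "z \<in> cl_ord_plus_sharp mult omega sharp X" and "perm_on C z"
  shows "left_unit_on C z"
  using assms(3,4)
proof induction
  case (mult y1 y2)
  then show ?case
    using assms(1) perm_on_multD left_unit_on_mult by blast
next
  case (sharp y)
  then show ?case
    using idempotent_perm_on_left_unit_on sharp_mult_sharp by blast
next
  case (omega y)
  then show ?case
    using assms(1) omega_perm_on_left_unit_on by blast
qed (use assms(2) in blast)

lemma cl_ord_plus_sharp_left_unit_on:
  assumes "\<forall>x\<in>X. left_unit_on C x" and "\<And>p. left_unit_on C p \<Longrightarrow> left_unit_on C (omega p)"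
    and "z \<in> cl_ord_plus_sharp mult omega sharp X"
  shows "left_unit_on C z"
  using assms(3)
  by induction (simp_all add: assms(1,2) left_unit_on_mult sharp_left_unit_on)

end

lemma cl_omega_sharp_eq_omega:
  assumes "\<forall>x\<in>C. \<forall>y\<in>C. mult x y \<in> C"
    and "\<forall>a\<in>A. left_unit_on C a" and "a \<in> A" and "u \<in> cl_omega_sharp mult omega sharp A"
  shows "u = omega a"
proof -
  obtain c d where u: "u = mult c (omega d)"
    and "c \<in> cl_plus_sharp mult sharp A" and "d \<in> cl_plus_sharp mult sharp A"
    using assms(4) unfolding cl_omega_sharp_def by blast
  then have "left_unit_on C c" and "left_unit_on C d"
    using cl_plus_sharp_left_unit_on[OF assms(1,2)] by blast+
  then have "omega c = omega a" and "omega d = omega a"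
    using omega_left_unit_on_eq assms(2,3) by blast+
  then show ?thesis using u mult_omega[of c] by simp
qed

lemma cl_ord_plus_sharp_left_units:
  fixes A :: "'a set"
  defines "C \<equiv> cl_ord_plus_sharp mult omega sharp A"
  assumes perm: "\<forall>a\<in>A. perm_on C a"
    and generated: "cl_ord_plus_sharp mult omega sharp (cl_omega_sharp mult omega sharp A) = C"
    and "x \<in> C"
  shows "left_unit_on C x"
proof -
  let ?U = "cl_omega_sharp mult omega sharp A"
  obtain a where "a \<in> A" using \<open>x \<in> C\<close> cl_ord_plus_sharp_empty unfolding C_def by fastforce
  have closed: "\<forall>x\<in>C. \<forall>y\<in>C. mult x y \<in> C"
    unfolding C_def by (auto intro: cl_ord_plus_sharp.mult)
  have "A \<subseteq> C" unfolding C_def by (auto intro: cl_ord_plus_sharp.base)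
  have "perm_on C u \<longrightarrow> left_unit_on C u" if "u \<in> ?U" for u
  proof -
    obtain c d where u: "u = mult c (omega d)"
      and "c \<in> cl_plus_sharp mult sharp A" and "d \<in> cl_plus_sharp mult sharp A"
      using \<open>u \<in> ?U\<close> unfolding cl_omega_sharp_def by blast
    then have "c \<in> C" and "d \<in> C" and "omega d \<in> C"
      using cl_plus_sharp_subset_cl_ord_plus_sharp[of mult sharp A omega] unfolding C_def
      by (auto intro: cl_ord_plus_sharp.omega)
    then show ?thesis using mult_omega_perm_on_left_unit_on[OF closed] u by blast
  qed
  then have A_units: "\<forall>b\<in>A. left_unit_on C b"
    using perm_on_cl_ord_plus_sharp_left_unit_on[OF closed, of ?U] generated \<open>A \<subseteq> C\<close> perm
    by blast
  then have U: "u = omega a" if "u \<in> ?U" for u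
    using cl_omega_sharp_eq_omega[OF closed] \<open>a \<in> A\<close> that by blast
  have "perm_on C (omega a)"
    using perm_on_cl_ord_plus_sharp_generator[OF closed, of ?U a] U generated perm \<open>a \<in> A\<close>
      \<open>A \<subseteq> C\<close> by blast
  then have e: "left_unit_on C (omega a)"
    using omega_perm_on_left_unit_on[OF closed] \<open>a \<in> A\<close> \<open>A \<subseteq> C\<close> by blast
  then have "left_unit_on C (omega p)" if "left_unit_on C p" for p
    using omega_left_unit_on_eq[OF that, of a] A_units \<open>a \<in> A\<close> e by simp
  then show ?thesis
    using cl_ord_plus_sharp_left_unit_on[OF closed, of ?U] U e generated \<open>x \<in> C\<close> by blast
qed

theorem trichotomy:
  "(\<exists>a\<in>A. mult a ` cl_ord_plus_sharp mult omega sharp A \<subset> cl_ord_plus_sharp mult omega sharp A)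
   \<or> cl_ord_plus_sharp mult omega sharp (cl_omega_sharp mult omega sharp A)
       \<subset> cl_ord_plus_sharp mult omega sharp A
   \<or> (\<forall>x\<in>cl_ord_plus_sharp mult omega sharp A. \<forall>y\<in>cl_ord_plus_sharp mult omega sharp A.
        mult x y = y \<and> omega x = omega y)"
  (is "_ \<or> _ \<or> ?trivial")
proof -
  define C where "C = cl_ord_plus_sharp mult omega sharp A"
  define V where "V = cl_ord_plus_sharp mult omega sharp (cl_omega_sharp mult omega sharp A)"
  have closed: "\<forall>x\<in>C. \<forall>y\<in>C. mult x y \<in> C"
    unfolding C_def by (auto intro: cl_ord_plus_sharp.mult)
  have "V \<subseteq> C"
    unfolding C_def V_def using cl_omega_sharp_subset_cl_ord_plus_sharp[of mult omega sharp A]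
    by (intro cl_ord_plus_sharp_least) (auto intro: cl_ord_plus_sharp.intros)
  have maps_into: "mult a ` C \<subseteq> C" and in_C: "a \<in> C" if "a \<in> A" for a
    using that closed unfolding C_def by (auto intro: cl_ord_plus_sharp.base)
  show ?thesis
  proof (cases "(\<exists>a\<in>A. mult a ` C \<subset> C) \<or> V \<subset> C")
    case True
    then show ?thesis unfolding C_def V_def by blast
  next
    case False
    have "perm_on C a" if "a \<in> A" for a
    proof -
      have "mult a ` C = C" using False maps_into[OF that] that by blast
      then show ?thesis using perm_on_iff_image_eq[OF closed] in_C[OF that] by blast
    qed
    moreover have "V = C" using False \<open>V \<subseteq> C\<close> by blast
    ultimately have "\<forall>x\<in>C. left_unit_on C x"
      using cl_ord_plus_sharp_left_units unfolding C_def V_def by blast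
    then have ?trivial
      using omega_left_unit_on_eq unfolding left_unit_on_def C_def by blast
    then show ?thesis by blast
  qed
qed

end

lemma ordinal_monoid_with_merge_imp_merge_algebra:
  assumes "ordinal_monoid_with_merge one mult omega sharp"
  shows "merge_algebra one mult omega sharp"
proof -
  obtain pi where "ordinal_product pi" and "presents pi one mult omega"
    using assms unfolding ordinal_monoid_with_merge_def ordered_ordinal_product_def by blast
  then interpret ordinal_product_presentation pi one mult omega by unfold_locales
  have sharp: "\<And>a. sharp (idem_pow one mult a) = idem_pow one mult a"
    "\<And>a. mult (sharp a) (sharp a) = sharp a"
    "\<And>a b. sharp (mult a b) = mult a (mult (sharp (mult b a)) b)"
    using assms unfolding ordinal_monoid_with_merge_def by blast+
  show ?thesis
  proof
    fix x y z :: 'a and k :: nat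
    show "mult (mult x y) z = mult x (mult y z)" by (rule mult_assoc)
    show "mult one x = x" by (rule mult_left_neutral)
    show "mult x one = x" by (rule mult_right_neutral)
    show "mult x (omega x) = omega x" by (rule mult_omega)
    show "omega (mult x y) = mult x (omega (mult y x))" by (rule omega_mult)
    show "0 < k \<Longrightarrow> omega (mpow one mult x k) = omega x" by (rule omega_mpow)
    show "mult (sharp x) (sharp x) = sharp x" by (rule sharp(2))
    show "mult x x = x \<Longrightarrow> sharp x = x"
      using sharp(1)[of x] idem_pow_idempotent[of mult one x] mult_right_neutral by simp
    show "mult x (sharp x) = sharp x"
      using sharp(3)[of x one] by (simp add: mult_left_neutral mult_right_neutral)
  qed
qed

theorem lemma5p10:
  fixes one :: "'a::{finite,order}"
    and mult :: "'a \<Rightarrow> 'a \<Rightarrow> 'a"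
    and omega sharp :: "'a \<Rightarrow> 'a"
    and A :: "'a set"
  assumes "ordinal_monoid_with_merge one mult omega sharp"
  shows "(\<exists>a\<in>A. mult a ` cl_ord_plus_sharp mult omega sharp A \<subset> cl_ord_plus_sharp mult omega sharp A)
       \<or> cl_ord_plus_sharp mult omega sharp (cl_omega_sharp mult omega sharp A)
           \<subset> cl_ord_plus_sharp mult omega sharp A
       \<or> (\<forall>x\<in>cl_ord_plus_sharp mult omega sharp A. \<forall>y\<in>cl_ord_plus_sharp mult omega sharp A.
            mult x y = y \<and> omega x = omega y)"
  using merge_algebra.trichotomy[OF ordinal_monoid_with_merge_imp_merge_algebra[OF assms]] .

end
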